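(* Let $m\ge7$ with $m\equiv3\pmod4$, let $N=3^m-1$ and $v=\frac{3^m-1}{2}-3^{(m-1)/2}-1$. Then $\gcd(v,N)=1$, and for every integer $i$ with $0\le i\le\frac{3^{(m-1)/2}+1}{4}+1$, the $3$-weight of $v(1+2i)\bmod N$ is congruent to $1$ modulo $4$ (i.e. the $3$-adic digit vector of $v(1+2i)\bmod N$ lies in $S_1(m)$).
   Context: For an integer $i$, $i\bmod N$ is the unique $s\in\{0,\dots,N-1\}$ with $N\mid i-s$. For $0\le s\le 3^m-1$ with $3$-adic expansion $s=\sum_{j=0}^{m-1}s_j3^j$, $s_j\in\{0,1,2\}$, the $3$-weight is $\mathrm{wt}_3(s)=\sum_j s_j$. $S_j(m)=\{(i_0,\dots,i_{m-1})\in\{0,1,2\}^m:\sum i_k\equiv j\pmod 4\}$. *)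

theory Defs
  imports Complex_Main
begin

definition wt3 :: "nat \<Rightarrow> nat \<Rightarrow> nat" where
  "wt3 m s = (\<Sum>j<m. (s div 3 ^ j) mod 3)"

end

theory Submission
  imports Defs
begin

(* Write m = 2k + 1 and T = 3^k, so that N = 3 T^2 - 1 and v = N/2 - (T + 1); as k is odd,
   T = 4q + 3.  Then v (1 + 2i) = N/2 + i N - (T + 1)(1 + 2i), whose residue mod N is
   T^2 - d (T + 1) with d = 2 (i - q), an even number in (-T, 4] under the bounds on i.
   For d = -c <= 0 this residue is 3^(2k) + c 3^k + c, with k-digit base-3 blocks 1, c, c, hence of
   weight 1 + 2 wt(c) where wt(c) is even because c is.  For d = 2, 4 it is (T-1-d) T + (T-d),
   whose two blocks are the digit-wise complements of d and d - 1, hence of weight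
   4k - wt(d) - wt(d - 1) = 4k - 3.  Coprimality holds because v is odd and 2 is an integer
   combination of v and N. *)

lemma wt3_0 [simp]: "wt3 0 s = 0"
  by (simp add: wt3_def)

lemma wt3_of_0 [simp]: "wt3 n 0 = 0"
  by (simp add: wt3_def)

lemma wt3_Suc: "wt3 (Suc n) s = s mod 3 + wt3 n (s div 3)"
  unfolding wt3_def sum.lessThan_Suc_shift by (simp add: div_mult2_eq)

lemma wt3_mult_power_add:
  assumes "y < 3 ^ a"
  shows "wt3 (a + b) (x * 3 ^ a + y) = wt3 b x + wt3 a y"
  using assms
proof (induction a arbitrary: y)
  case 0
  then show ?case by simp
next
  case (Suc a)
  have digits: "x * 3 ^ Suc a + y = 3 * (x * 3 ^ a + y div 3) + y mod 3"
    by simp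
  have "(x * 3 ^ Suc a + y) mod 3 = y mod 3"
    and "(x * 3 ^ Suc a + y) div 3 = x * 3 ^ a + y div 3"
    unfolding digits by simp_all
  moreover have "y div 3 < 3 ^ a"
    using Suc.prems by auto
  ultimately show ?case
    using Suc.IH by (simp add: wt3_Suc)
qed

lemma wt3_leading_zeros:
  assumes "y < 3 ^ n" and "n \<le> l"
  shows "wt3 l y = wt3 n y"
  using wt3_mult_power_add[OF assms(1), of "l - n" 0] assms(2) by simp

lemma even_wt3_iff:
  assumes "y < 3 ^ n"
  shows "even (wt3 n y) \<longleftrightarrow> even y"
  using assms
proof (induction n arbitrary: y)
  case 0
  then show ?case by simp
next
  case (Suc n)
  have "y div 3 < 3 ^ n"
    using Suc.prems by auto
  with Suc.IH have "even (wt3 n (y div 3)) \<longleftrightarrow> even (y div 3)" .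
  moreover have "y = 3 * (y div 3) + y mod 3" by simp
  ultimately show ?case
    unfolding wt3_Suc by presburger
qed

lemma wt3_complement:
  assumes "y < 3 ^ n"
  shows "wt3 n (3 ^ n - 1 - y) + wt3 n y = 2 * n"
  using assms
proof (induction n arbitrary: y)
  case 0
  then show ?case by simp
next
  case (Suc n)
  have less: "y div 3 < 3 ^ n"
    using Suc.prems by auto
  define r where "r = 2 - y mod 3"
  have "r + y mod 3 = 2" "r < 3"
    by (simp_all add: r_def)
  have digits: "3 ^ Suc n - 1 - y = 3 * (3 ^ n - 1 - y div 3) + r"
    using less unfolding r_def by (simp add: algebra_simps)
  have "(3 ^ Suc n - 1 - y) mod 3 = r"
    and "(3 ^ Suc n - 1 - y) div 3 = 3 ^ n - 1 - y div 3"
    unfolding digits by (simp_all add: \<open>r < 3\<close>)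
  then show ?case
    using Suc.IH[OF less] \<open>r + y mod 3 = 2\<close> by (simp add: wt3_Suc)
qed

lemma wt3_square_add:
  assumes "c < 3 ^ k"
  shows "wt3 (2 * k + 1) (3 ^ (2 * k) + c * (3 ^ k + 1)) = 1 + 2 * wt3 k c"
proof -
  have "3 ^ (2 * k) + c * (3 ^ k + 1) = (1 * 3 ^ k + c) * 3 ^ k + c"
    by (simp add: algebra_simps flip: power_add mult_2)
  then have "wt3 (2 * k + 1) (3 ^ (2 * k) + c * (3 ^ k + 1))
      = wt3 (k + (k + 1)) ((1 * 3 ^ k + c) * 3 ^ k + c)"
    by (simp only: mult_2 add.assoc)
  also have "\<dots> = wt3 (k + 1) (1 * 3 ^ k + c) + wt3 k c"
    by (rule wt3_mult_power_add[OF assms])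
  also have "wt3 (k + 1) (1 * 3 ^ k + c) = wt3 1 1 + wt3 k c"
    by (rule wt3_mult_power_add[OF assms])
  finally show ?thesis
    by (simp add: wt3_Suc)
qed

lemma wt3_square_diff:
  assumes "0 < d" and "d < 3 ^ k"
  shows "wt3 (2 * k + 1) (3 ^ (2 * k) - d * (3 ^ k + 1)) + wt3 k d + wt3 k (d - 1) = 4 * k"
proof -
  obtain e where e: "3 ^ k = Suc (d + e)"
    using less_imp_Suc_add[OF assms(2)] by blast
  have "3 ^ (2 * k) - d * (3 ^ k + 1) = e * 3 ^ k + Suc e"
    unfolding mult_2 power_add e by (simp add: algebra_simps)
  then have "wt3 (2 * k + 1) (3 ^ (2 * k) - d * (3 ^ k + 1)) = wt3 (k + (k + 1)) (e * 3 ^ k + Suc e)"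
    by (simp only: mult_2 add.assoc)
  also have "\<dots> = wt3 (k + 1) e + wt3 k (Suc e)"
    using assms(1) by (intro wt3_mult_power_add) (simp add: e)
  also have "wt3 (k + 1) e = wt3 k e"
    by (rule wt3_leading_zeros) (simp_all add: e)
  finally have "wt3 (2 * k + 1) (3 ^ (2 * k) - d * (3 ^ k + 1)) = wt3 k e + wt3 k (Suc e)" .
  moreover have "wt3 k e + wt3 k d = 2 * k"
    using wt3_complement[of d k] assms(2) by (simp add: e)
  moreover have "wt3 k (Suc e) + wt3 k (d - 1) = 2 * k"
    using wt3_complement[of "d - 1" k] assms by (simp add: e)
  ultimately show ?thesis
    by simp
qed

lemma wt3_square_add_mod_4:
  assumes "c < 3 ^ k" and "even c"
  shows "wt3 (2 * k + 1) (3 ^ (2 * k) + c * (3 ^ k + 1)) mod 4 = 1"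
proof -
  have "even (wt3 k c)"
    using even_wt3_iff[OF assms(1)] assms(2) by simp
  then show ?thesis
    unfolding wt3_square_add[OF assms(1)] by (auto elim!: evenE)
qed

lemma wt3_square_diff_mod_4:
  assumes "2 \<le> k" and "e = 2 \<or> e = 4"
  shows "wt3 (2 * k + 1) (3 ^ (2 * k) - e * (3 ^ k + 1)) mod 4 = 1"
proof -
  have "wt3 k y = wt3 2 y" if "y < 9" for y
    using wt3_leading_zeros[of y 2 k] that assms(1) by simp
  then have "wt3 k 1 = 1" "wt3 k 2 = 2" "wt3 k 3 = 1" "wt3 k 4 = 2"
    by (simp_all add: wt3_def numeral_2_eq_2)
  then have "wt3 k e + wt3 k (e - 1) = 3"
    using assms(2) by auto
  have "(9::nat) \<le> 3 ^ k"
    using power_increasing[OF assms(1), of "3::nat"] by simp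
  then have "0 < e" and "e < 3 ^ k"
    using assms(2) by auto
  then have "wt3 (2 * k + 1) (3 ^ (2 * k) - e * (3 ^ k + 1)) + 3 = 4 * k"
    using wt3_square_diff[of e k] \<open>wt3 k e + wt3 k (e - 1) = 3\<close> by simp
  then show ?thesis
    using assms(1) by presburger
qed

lemma wt3_square_sub_mod_4:
  fixes d :: int
  assumes "2 \<le> k" and "even d" and "- (3 ^ k) < d" and "d \<le> 4"
  shows "wt3 (2 * k + 1) (nat (3 ^ (2 * k) - d * (3 ^ k + 1))) mod 4 = 1"
proof (cases "d \<le> 0")
  case True
  define c where "c = nat (- d)"
  have "int (3 ^ (2 * k) + c * (3 ^ k + 1)) = 3 ^ (2 * k) - d * (3 ^ k + 1)"
    using True unfolding c_def by (simp add: algebra_simps)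
  then have "nat (3 ^ (2 * k) - d * (3 ^ k + 1)) = 3 ^ (2 * k) + c * (3 ^ k + 1)"
    by linarith
  moreover have "c < 3 ^ k" and "even c"
    using True assms(2,3) unfolding c_def by (simp_all add: even_nat_iff)
  ultimately show ?thesis
    using wt3_square_add_mod_4 by simp
next
  case False
  define e where "e = nat d"
  have "d = 2 \<or> d = 4"
    using False assms(2,4) by presburger
  then have e: "e = 2 \<or> e = 4"
    unfolding e_def by auto
  have "(9::nat) \<le> 3 ^ k"
    using power_increasing[OF assms(1), of "3::nat"] by simp
  then have "9 * 3 ^ k \<le> 3 ^ k * (3 ^ k :: nat)"
    by (rule mult_right_mono) simp
  moreover have "e * (3 ^ k + 1) \<le> 4 * 3 ^ k + 4"
    using mult_right_mono[of e 4 "3 ^ k + 1"] e by auto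
  ultimately have "e * (3 ^ k + 1) \<le> 3 ^ k * 3 ^ k"
    using \<open>9 \<le> 3 ^ k\<close> by linarith
  then have "int (3 ^ (2 * k) - e * (3 ^ k + 1)) = 3 ^ (2 * k) - d * (3 ^ k + 1)"
    using False unfolding e_def by (simp add: algebra_simps flip: power_add mult_2)
  then have "nat (3 ^ (2 * k) - d * (3 ^ k + 1)) = 3 ^ (2 * k) - e * (3 ^ k + 1)"
    by linarith
  then show ?thesis
    using wt3_square_diff_mod_4[OF assms(1) e] by simp
qed

lemma three_power_odd_mod_4:
  assumes "odd k"
  shows "(3::int) ^ k mod 4 = 3"
proof -
  obtain t where "k = 2 * t + 1"
    using assms oddE by blast
  then have "(3::int) ^ k mod 4 = 3 * (9 ^ t mod 4) mod 4"
    by (simp add: power_mult mod_mult_right_eq)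
  also have "(9::int) ^ t mod 4 = 1"
    using power_mod[of "9::int" 4 t] by simp
  finally show ?thesis
    by simp
qed

lemma gcd_half_minus_coprime:
  fixes T :: int
  assumes "odd T"
  shows "gcd ((3 * T\<^sup>2 - 1) div 2 - T - 1) (3 * T\<^sup>2 - 1) = 1"
proof -
  obtain b where T: "T = 2 * b + 1"
    using assms oddE by blast
  define v N where "v = 6 * b\<^sup>2 + 4 * b - 1" and "N = 12 * b\<^sup>2 + 12 * b + 2"
  have "2 = N * (1 - 3 * b) + v * (6 * b)"
    unfolding v_def N_def by (simp add: power2_eq_square algebra_simps)
  then have "gcd v N dvd 2"
    by (metis dvd_add dvd_mult2 gcd_dvd1 gcd_dvd2)
  then have "gcd v N \<le> 2"
    by (simp add: zdvd_imp_le)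
  moreover have "odd v"
    unfolding v_def by simp
  then have "odd (gcd v N)"
    by (meson dvd_trans gcd_dvd1)
  ultimately have "gcd v N = 1"
    using gcd_ge_0_int[of v N] by presburger
  moreover have "3 * T\<^sup>2 - 1 = N" and "(3 * T\<^sup>2 - 1) div 2 - T - 1 = v"
    unfolding T v_def N_def by (simp_all add: power2_eq_square algebra_simps)
  ultimately show ?thesis
    by simp
qed

lemma half_minus_mult_odd_mod:
  fixes q i :: int
  defines "T \<equiv> 4 * q + 3"
  assumes "1 \<le> q" and "0 \<le> i" and "i \<le> q + 2"
  shows "(((3 * T\<^sup>2 - 1) div 2 - T - 1) * (1 + 2 * i)) mod (3 * T\<^sup>2 - 1)
    = T\<^sup>2 - 2 * (i - q) * (T + 1)"
proof -
  define R where "R = T\<^sup>2 - 2 * (i - q) * (T + 1)"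
  have "(3 * T\<^sup>2 - 1) div 2 = 24 * q\<^sup>2 + 36 * q + 13"
    unfolding T_def by (simp add: power2_eq_square algebra_simps)
  then have quotient: "((3 * T\<^sup>2 - 1) div 2 - T - 1) * (1 + 2 * i) = R + i * (3 * T\<^sup>2 - 1)"
    unfolding R_def T_def by (simp add: power2_eq_square algebra_simps)
  have "7 \<le> T"
    using assms(2) by (simp add: T_def)
  then have "7 * T \<le> T\<^sup>2"
    by (simp add: power2_eq_square mult_right_mono)
  have "(i - q) * (T + 1) \<le> 2 * (T + 1)" and "- q * (T + 1) \<le> (i - q) * (T + 1)"
      and "2 * q * (T + 1) \<le> T * (T + 1)"
    using assms(3,4) \<open>7 \<le> T\<close> by (intro mult_right_mono; simp add: T_def)+
  moreover have "T * (T + 1) = T\<^sup>2 + T" and "- q * (T + 1) = - (q * (T + 1))"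
    by (simp_all add: power2_eq_square algebra_simps)
  ultimately have "0 \<le> R" and "R < 3 * T\<^sup>2 - 1"
    using R_def \<open>7 * T \<le> T\<^sup>2\<close> \<open>7 \<le> T\<close> by (simp_all add: algebra_simps)
  then show ?thesis
    unfolding quotient by (simp add: R_def)
qed

theorem lemma42:
  fixes m :: nat
  assumes "m \<ge> 7" and "m mod 4 = 3"
  defines "N \<equiv> (3::int) ^ m - 1"
      and "v \<equiv> ((3::int) ^ m - 1) div 2 - 3 ^ ((m - 1) div 2) - 1"
  shows "gcd v N = 1 \<and>
    (\<forall>i::int. 0 \<le> i \<and> real_of_int i \<le> ((3::real) ^ ((m - 1) div 2) + 1) / 4 + 1 \<longrightarrow>
       wt3 m (nat ((v * (1 + 2 * i)) mod N)) mod 4 = 1)"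
proof -
  define k where "k = (m - 1) div 2"
  have m: "m = 2 * k + 1" and "odd k" and "3 \<le> k"
    using assms(1,2) unfolding k_def by presburger+
  define T :: int where "T = 3 ^ k"
  define q where "q = T div 4"
  have "T mod 4 = 3"
    unfolding T_def using \<open>odd k\<close> by (rule three_power_odd_mod_4)
  then have T: "T = 4 * q + 3"
    using div_mult_mod_eq[of T 4] unfolding q_def by linarith
  have "(3::int) ^ 3 \<le> T"
    unfolding T_def using \<open>3 \<le> k\<close> by (rule power_increasing) simp
  then have "1 \<le> q"
    using T by simp
  have T2: "T\<^sup>2 = 3 ^ (2 * k)"
    unfolding T_def by (simp add: mult.commute flip: power_mult)
  have N: "N = 3 * T\<^sup>2 - 1"
    unfolding N_def m using T2 by simp
  have v: "v = (3 * T\<^sup>2 - 1) div 2 - T - 1"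
    unfolding v_def k_def[symmetric] T_def[symmetric] unfolding m using T2 by simp
  have "gcd v N = 1"
    unfolding N v by (rule gcd_half_minus_coprime) (simp add: T_def)
  moreover have "wt3 m (nat ((v * (1 + 2 * i)) mod N)) mod 4 = 1"
    if "0 \<le> i" and "real_of_int i \<le> ((3::real) ^ ((m - 1) div 2) + 1) / 4 + 1" for i :: int
  proof -
    have "(3::real) ^ ((m - 1) div 2) = real_of_int T"
      unfolding T_def k_def by simp
    then have "i \<le> q + 2"
      using that(2) T by (simp add: add_divide_distrib)
    then have "(v * (1 + 2 * i)) mod N = T\<^sup>2 - 2 * (i - q) * (T + 1)"
      unfolding N v T by (rule half_minus_mult_odd_mod[OF \<open>1 \<le> q\<close> \<open>0 \<le> i\<close>])
    also have "\<dots> = 3 ^ (2 * k) - 2 * (i - q) * (3 ^ k + 1)"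
      using T2 by (simp add: T_def)
    finally have "wt3 m (nat ((v * (1 + 2 * i)) mod N))
        = wt3 (2 * k + 1) (nat (3 ^ (2 * k) - 2 * (i - q) * (3 ^ k + 1)))"
      unfolding m by simp
    moreover have "- T < 2 * (i - q)"
      using \<open>0 \<le> i\<close> \<open>1 \<le> q\<close> T by presburger
    moreover have "2 * (i - q) \<le> 4"
      using \<open>i \<le> q + 2\<close> by presburger
    ultimately show ?thesis
      using wt3_square_sub_mod_4[of k "2 * (i - q)"] \<open>3 \<le> k\<close> unfolding T_def by simp
  qed
  ultimately show ?thesis
    by blast
qed

end
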